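(* Let $n\ge2$, let $B$ be the open unit ball of $\mathbb{R}^n$ centered at $0$, let $\psi\in C_0^\infty(\mathbb{R}^n)$ with $\operatorname{supp}\psi\subseteq B$ and $\psi\not\equiv0$, and let $\Omega\subset\mathbb{R}^n$ be a bounded open set star-shaped with respect to every point of $\overline B$. Let $q>n$ and $F\in L^q(\Omega)$. Then: (i) the formula $$v(x)=\int_\Omega F(y)\left[\frac{x-y}{|x-y|^n}\int_{|x-y|}^{+\infty}\psi\Big(y+\xi\frac{x-y}{|x-y|}\Big)\xi^{n-1}d\xi\right]dy$$ defines $v(x)$ for every $x\in\mathbb{R}^n$ (not only almost everywhere), giving a function $v:\mathbb{R}^n\to\mathbb{R}^n$; (ii) $v(x)=0$ for all $x\in\mathbb{R}^n\setminus\Omega$; (iii) $|v(x)|\le c\,\|F\|_{L^q(\Omega)}$ for all $x\in\mathbb{R}^n$, where $c$ depends only on $n,\psi,\operatorname{diam}\Omega$ and $q$; (iv) $v(x)=\int_\Omega F(y)\Big[(x-y)\int_1^\infty\psi(y+\alpha(x-y))\alpha^{n-1}d\alpha\Big]dy$; (v) $v(x)=\int_\Omega F(y)\Big[\frac{x-y}{|x-y|^n}\int_0^\infty\psi\big(x+r\frac{x-y}{|x-y|}\big)(|x-y|+r)^{n-1}dr\Big]dy$; (vi) $v(x)=\int_{x-\Omega}F(x-z)\frac{z}{|z|^n}\int_0^\infty\psi\big(x+r\frac{z}{|z|}\big)(|z|+r)^{n-1}\,dr\,dz$, where $x-\Omega=\{x-y:\ y\in\Omega\}$.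
   Context: $\Omega$ is star-shaped with respect to a point $p$ if $p\in\Omega$ and for every $y\in\Omega$ the segment joining $p$ and $y$ lies in $\Omega$. *)

theory Defs
  imports "HOL-Analysis.Analysis"
begin

fun iter_deriv :: "('a::real_normed_vector \<Rightarrow> real) \<Rightarrow> 'a list \<Rightarrow> 'a \<Rightarrow> real" where
  "iter_deriv f [] = f"
| "iter_deriv f (u # us) = (\<lambda>x. frechet_derivative (iter_deriv f us) (at x) u)"

definition smooth_fun :: "('a::real_normed_vector \<Rightarrow> real) \<Rightarrow> bool" where
  "smooth_fun f \<longleftrightarrow> (\<forall>us x. iter_deriv f us differentiable (at x))"

definition supp :: "('a::topological_space \<Rightarrow> real) \<Rightarrow> 'a set" where
  "supp f = closure {x. f x \<noteq> 0}"

definition star_shaped_wrt :: "'a::real_vector \<Rightarrow> 'a set \<Rightarrow> bool" where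
  "star_shaped_wrt p S \<longleftrightarrow> p \<in> S \<and> (\<forall>y\<in>S. closed_segment p y \<subseteq> S)"

definition Lq_norm :: "real \<Rightarrow> ('a::euclidean_space) set \<Rightarrow> ('a \<Rightarrow> real) \<Rightarrow> real" where
  "Lq_norm q S F = (LINT y:S|lebesgue. \<bar>F y\<bar> powr q) powr (1 / q)"

definition inner_fn :: "(real^'n \<Rightarrow> real) \<Rightarrow> real^'n \<Rightarrow> real^'n \<Rightarrow> real \<Rightarrow> real" where
  "inner_fn \<psi> x y \<xi> = \<psi> (y + \<xi> *\<^sub>R ((x - y) /\<^sub>R norm (x - y))) * \<xi> ^ (CARD('n) - 1)"

definition kernel :: "(real^'n \<Rightarrow> real) \<Rightarrow> real^'n \<Rightarrow> real^'n \<Rightarrow> real^'n" where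
  "kernel \<psi> x y = ((LBINT \<xi>:{norm (x - y)..}. inner_fn \<psi> x y \<xi>) / norm (x - y) ^ CARD('n)) *\<^sub>R (x - y)"

definition v_op :: "(real^'n \<Rightarrow> real) \<Rightarrow> (real^'n) set \<Rightarrow> (real^'n \<Rightarrow> real) \<Rightarrow> real^'n \<Rightarrow> real^'n" where
  "v_op \<psi> \<Omega> F x = (LINT y:\<Omega>|lebesgue. F y *\<^sub>R kernel \<psi> x y)"

end

theory Submission
  imports Defs
begin

(* The inner integral defining the kernel K(x,y) only sees the points y + xi (x - y)/|x - y|
   with xi >= |x - y| at which psi is nonzero, i.e. points of the unit ball lying on the ray
   from y through x beyond x.  If y is in Omega and Omega is star-shaped with respect to such a
   point, x lies on a segment inside Omega; hence K(x,y) = 0 whenever x is outside Omega.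
   Since psi is bounded and supported in the unit ball, |K(x,y)| <= C |x - y|^(1-n) with C
   depending only on psi and diam Omega.  For q > n the dual exponent p = q/(q-1) satisfies
   (n-1) p < n, so K(x,.) lies in L^p(Omega) with a norm bounded uniformly in x (the Riesz
   potential of a ball is finite), and Hoelder's inequality bounds v(x).  The remaining
   formulas are the substitutions xi = alpha |x - y|, xi = |x - y| + r and z = x - y. *)


lemma smooth_fun_imp_continuous:
  fixes f :: "'a::real_normed_vector \<Rightarrow> real"
  assumes "smooth_fun f"
  shows "continuous_on UNIV f"
proof -
  have "f differentiable (at x)" for x
    using assms iter_deriv.simps(1)[of f] unfolding smooth_fun_def by metis
  then have "isCont f x" for x
    by (rule differentiable_imp_continuous_within)
  then show ?thesis
    by (rule continuous_at_imp_continuous_on[rule_format])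
qed

lemma norm_less_one_if_supp_subset_ball:
  fixes f :: "'a::real_normed_vector \<Rightarrow> real"
  assumes "supp f \<subseteq> ball 0 1" and "f z \<noteq> 0"
  shows "norm z < 1"
proof -
  have "z \<in> closure {x. f x \<noteq> 0}"
    using assms(2) closure_subset[of "{x. f x \<noteq> 0}"] by blast
  then have "z \<in> ball 0 1"
    using assms(1) unfolding supp_def by blast
  then show ?thesis
    by simp
qed

lemma bounded_if_continuous_vanishing_outside_ball:
  fixes f :: "'a::{real_normed_vector, heine_borel} \<Rightarrow> real"
  assumes "continuous_on UNIV f" and "\<And>z. f z \<noteq> 0 \<Longrightarrow> norm z < 1"
  obtains M where "\<And>z. \<bar>f z\<bar> \<le> M"
proof -
  have "compact (f ` cball 0 1)"
    by (intro compact_continuous_image continuous_on_subset[OF assms(1)]) auto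
  then obtain B where "\<forall>y\<in>f ` cball 0 1. norm y \<le> B"
    using compact_imp_bounded bounded_iff by blast
  then have B: "\<And>z. z \<in> cball 0 1 \<Longrightarrow> \<bar>f z\<bar> \<le> B" by simp
  have "\<bar>f z\<bar> \<le> max B 0" for z
    using B[of z] assms(2)[of z] by (cases "f z = 0") auto
  then show ?thesis by (rule that)
qed

lemma lebesgue_reflection:
  fixes x :: "'a::euclidean_space"
  shows "distr lebesgue lebesgue (\<lambda>z. x - z) = lebesgue"
    and "(\<lambda>z. x - z) \<in> lebesgue \<rightarrow>\<^sub>M lebesgue"
proof -
  have T: "(\<lambda>z. x + (\<Sum>j\<in>Basis. (-1 * (z \<bullet> j)) *\<^sub>R j)) = (\<lambda>z. x - z)"
    by (simp add: sum_negf euclidean_representation)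
  show "(\<lambda>z. x - z) \<in> lebesgue \<rightarrow>\<^sub>M lebesgue"
    using lebesgue_affine_measurable[of "\<lambda>_. -1" x] unfolding T by simp
  show "distr lebesgue lebesgue (\<lambda>z. x - z) = lebesgue"
    using lebesgue_affine_euclidean[of "\<lambda>_. -1" x] unfolding T by (simp add: density_1)
qed

lemma set_integral_reflection:
  fixes f :: "'a::euclidean_space \<Rightarrow> 'b::{banach, second_countable_topology}"
  assumes "set_borel_measurable lebesgue S f"
  shows "(LINT y:S|lebesgue. f y) = (LINT z:(\<lambda>y. x - y) ` S|lebesgue. f (x - z))"
proof -
  have "indicator ((\<lambda>y. x - y) ` S) z = (indicator S (x - z) :: real)" for z
    by (auto simp: indicator_def image_iff intro!: bexI[of _ "x - z"])
  then have "(LINT z:(\<lambda>y. x - y) ` S|lebesgue. f (x - z))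
      = (LINT z|lebesgue. indicator S (x - z) *\<^sub>R f (x - z))"
    unfolding set_lebesgue_integral_def by simp
  also have "\<dots> = (LINT y|distr lebesgue lebesgue (\<lambda>z. x - z). indicator S y *\<^sub>R f y)"
    using assms unfolding set_borel_measurable_def
    by (intro integral_distr[symmetric] lebesgue_reflection(2))
  finally show ?thesis
    unfolding lebesgue_reflection(1) set_lebesgue_integral_def ..
qed

lemma integrable_mult_if_conjugate_powr_integrable:
  fixes f g :: "'a \<Rightarrow> real"
  assumes "f \<in> borel_measurable M" "g \<in> borel_measurable M"
    and "integrable M (\<lambda>x. \<bar>f x\<bar> powr p)" "integrable M (\<lambda>x. \<bar>g x\<bar> powr p')"
    and "p > 1" "p' > 1" "1/p + 1/p' = 1"
  shows "integrable M (\<lambda>x. f x * g x)"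
proof (rule Bochner_Integration.integrable_bound)
  show "integrable M (\<lambda>x. \<bar>f x\<bar> powr p / p + \<bar>g x\<bar> powr p' / p')"
    using assms by auto
  show "AE x in M. norm (f x * g x) \<le> norm (\<bar>f x\<bar> powr p / p + \<bar>g x\<bar> powr p' / p')"
    using Youngs_inequality[of p p' "\<bar>f _\<bar>" "\<bar>g _\<bar>"] assms(5-7) by (simp add: abs_mult)
qed (use assms in measurable)

lemma Holder_inequality:
  fixes f g :: "'a \<Rightarrow> real"
  assumes "f \<in> borel_measurable M" and "g \<in> borel_measurable M"
    and fi: "integrable M (\<lambda>x. \<bar>f x\<bar> powr p)" and gi: "integrable M (\<lambda>x. \<bar>g x\<bar> powr p')"
    and p: "p > 1" "p' > 1" "1/p + 1/p' = 1"
  shows "(LINT x|M. \<bar>f x * g x\<bar>)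
    \<le> (LINT x|M. \<bar>f x\<bar> powr p) powr (1/p) * (LINT x|M. \<bar>g x\<bar> powr p') powr (1/p')"
proof -
  define A where "A = (LINT x|M. \<bar>f x\<bar> powr p)"
  define B where "B = (LINT x|M. \<bar>g x\<bar> powr p')"
  have A0: "A \<ge> 0" and B0: "B \<ge> 0"
    unfolding A_def B_def by (auto intro: integral_nonneg_AE)
  have fgi: "integrable M (\<lambda>x. \<bar>f x * g x\<bar>)"
    using integrable_mult_if_conjugate_powr_integrable[OF assms] by (rule integrable_abs)
  show ?thesis
  proof (cases "A = 0 \<or> B = 0")
    case True
    then have "(AE x in M. \<bar>f x\<bar> powr p = 0) \<or> (AE x in M. \<bar>g x\<bar> powr p' = 0)"
      using integral_nonneg_eq_0_iff_AE[OF fi] integral_nonneg_eq_0_iff_AE[OF gi]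
      unfolding A_def B_def by auto
    then have "AE x in M. \<bar>f x * g x\<bar> = 0"
    proof
      assume "AE x in M. \<bar>f x\<bar> powr p = 0"
      then show ?thesis by (rule eventually_mono) simp
    next
      assume "AE x in M. \<bar>g x\<bar> powr p' = 0"
      then show ?thesis by (rule eventually_mono) simp
    qed
    then have "(LINT x|M. \<bar>f x * g x\<bar>) = 0"
      by (rule integral_eq_zero_AE)
    then show ?thesis using A0 B0 unfolding A_def B_def by simp
  next
    case False
    then have Ap: "A > 0" and Bp: "B > 0" using A0 B0 by auto
    define a where "a = A powr (1/p)"
    define b where "b = B powr (1/p')"
    have ap: "a > 0" and bp: "b > 0" unfolding a_def b_def using Ap Bp by auto
    have aA: "a powr p = A" and bB: "b powr p' = B"
      unfolding a_def b_def using Ap Bp p by (simp_all add: powr_powr)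
    \<comment> \<open>Young's inequality applied to \<open>f/a\<close> and \<open>g/b\<close>, where \<open>a\<close>, \<open>b\<close> are the two norms\<close>
    have pointwise: "\<bar>f x * g x\<bar> \<le> a * b * (\<bar>f x\<bar> powr p / (p * A) + \<bar>g x\<bar> powr p' / (p' * B))" for x
    proof -
      have "(\<bar>f x\<bar> / a) * (\<bar>g x\<bar> / b) \<le> (\<bar>f x\<bar> / a) powr p / p + (\<bar>g x\<bar> / b) powr p' / p'"
        by (rule Youngs_inequality) (use p ap bp in auto)
      also have "\<dots> = \<bar>f x\<bar> powr p / (p * A) + \<bar>g x\<bar> powr p' / (p' * B)"
        using ap bp aA bB by (simp add: powr_divide mult.commute)
      finally have "(\<bar>f x\<bar> / a) * (\<bar>g x\<bar> / b) \<le> \<bar>f x\<bar> powr p / (p * A) + \<bar>g x\<bar> powr p' / (p' * B)" .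
      then have "a * b * ((\<bar>f x\<bar> / a) * (\<bar>g x\<bar> / b))
          \<le> a * b * (\<bar>f x\<bar> powr p / (p * A) + \<bar>g x\<bar> powr p' / (p' * B))"
        using ap bp by (intro mult_left_mono) auto
      then show ?thesis using ap bp by (simp add: abs_mult)
    qed
    have "(LINT x|M. \<bar>f x * g x\<bar>)
        \<le> (LINT x|M. a * b * (\<bar>f x\<bar> powr p / (p * A) + \<bar>g x\<bar> powr p' / (p' * B)))"
      by (rule integral_mono[OF fgi]) (use fi gi pointwise in auto)
    also have "\<dots> = a * b * (A / (p * A) + B / (p' * B))"
      using fi gi unfolding A_def B_def by simp
    also have "\<dots> = a * b"
      using Ap Bp p by simp
    finally show ?thesis unfolding a_def b_def A_def B_def .
  qed
qed

lemma power_CARD_eq_mult: "(a::'a::monoid_mult) ^ CARD('n::finite) = a * a ^ (CARD('n) - 1)"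
  by (simp add: power_Suc[symmetric])

lemma of_nat_CARD_minus_1: "real (CARD('n::finite) - 1) = real CARD('n) - 1"
  using zero_less_card_finite[where 'a = 'n] by (simp add: of_nat_diff)

lemma one_le_real_CARD: "1 \<le> real CARD('n::finite)"
  using zero_less_card_finite[where 'a = 'n] by linarith

section \<open>Riesz potentials of balls\<close>

text \<open>The value \<open>\<infinity>\<close> at \<open>0\<close> lets a product of these weights dominate \<open>\<bar>z\<bar> powr -s\<close> also on the
  null set of points \<open>z\<close> with a vanishing coordinate.\<close>
definition truncated_power_weight :: "real \<Rightarrow> real \<Rightarrow> real \<Rightarrow> ennreal" where
  "truncated_power_weight a D t =
     (if t = 0 then \<infinity> else ennreal (indicator {-D..D} t * \<bar>t\<bar> powr (-a)))"

lemma borel_measurable_truncated_power_weight[measurable]: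
  "truncated_power_weight a D \<in> borel_measurable borel"
  unfolding truncated_power_weight_def[abs_def] by measurable

lemma nn_integral_truncated_power_weight:
  fixes a D :: real
  assumes "0 \<le> a" "a < 1" "0 \<le> D"
  shows "(\<integral>\<^sup>+ t. truncated_power_weight a D t \<partial>lborel) = ennreal (2 * (D powr (1 - a) / (1 - a)))"
proof -
  let ?g = "\<lambda>t. indicator {0..D} t * t powr (-a)"
  have "((\<lambda>t. t powr (-a)) has_integral (D powr (1 - a) / (1 - a))) {0..D}"
    using has_integral_powr_from_0[of "-a" D] assms by simp
  then have "((\<lambda>t. if t \<in> {0..D} then t powr (-a) else 0) has_integral (D powr (1 - a) / (1 - a))) UNIV"
    unfolding has_integral_restrict_UNIV .
  moreover have "(\<lambda>t. if t \<in> {0..D} then t powr (-a) else 0) = ?g"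
    by (auto simp: indicator_def)
  ultimately have "(?g has_integral (D powr (1 - a) / (1 - a))) UNIV"
    by simp
  then have half: "(\<integral>\<^sup>+ t. ennreal (?g t) \<partial>lborel) = ennreal (D powr (1 - a) / (1 - a))"
    by (rule nn_integral_has_integral_lborel[rotated 2]) (auto simp: indicator_def)
  have "AE t in lborel. truncated_power_weight a D t = ennreal (?g t) + ennreal (?g (-t))"
    using AE_lborel_singleton[of 0]
    by eventually_elim (auto simp: truncated_power_weight_def indicator_def)
  then have "(\<integral>\<^sup>+ t. truncated_power_weight a D t \<partial>lborel)
      = (\<integral>\<^sup>+ t. ennreal (?g t) \<partial>lborel) + (\<integral>\<^sup>+ t. ennreal (?g (-t)) \<partial>lborel)"
    by (simp add: nn_integral_cong_AE nn_integral_add)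
  also have "(\<integral>\<^sup>+ t. ennreal (?g (-t)) \<partial>lborel) = (\<integral>\<^sup>+ t. ennreal (?g t) \<partial>lborel)"
    using nn_integral_real_affine[of "\<lambda>t. ennreal (?g t)" "-1" 0] by simp
  finally show ?thesis
    unfolding half using assms by (simp add: ennreal_plus[symmetric] del: ennreal_plus)
qed

lemma norm_powr_neg_le_prod_abs_inner_powr:
  fixes z :: "'a::euclidean_space" and a :: real
  assumes "0 \<le> a" and "\<And>b. b \<in> Basis \<Longrightarrow> z \<bullet> b \<noteq> 0"
  shows "norm z powr (- (a * DIM('a))) \<le> (\<Prod>b\<in>Basis. \<bar>z \<bullet> b\<bar> powr (-a))"
proof -
  have "z \<noteq> 0" using assms(2)[OF SOME_Basis] by auto
  then have "norm z powr (- (a * DIM('a))) = (norm z powr (-a)) ^ DIM('a)"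
    by (simp add: powr_powr powr_realpow[symmetric])
  also have "\<dots> = (\<Prod>b\<in>(Basis::'a set). norm z powr (-a))"
    by simp
  also have "\<dots> \<le> (\<Prod>b\<in>Basis. \<bar>z \<bullet> b\<bar> powr (-a))"
    using assms Basis_le_norm by (intro prod_mono conjI powr_mono2') auto
  finally show ?thesis .
qed

definition riesz_ball_bound :: "nat \<Rightarrow> real \<Rightarrow> real \<Rightarrow> real" where
  "riesz_ball_bound n s D = (2 * (D powr (1 - s / n) / (1 - s / n))) ^ n"

text \<open>Dominating \<open>\<bar>z\<bar> powr -s\<close> by \<open>\<Prod>b\<in>Basis. \<bar>z \<bullet> b\<bar> powr (-s/n)\<close> turns the integral into a
  product of one-dimensional integrals.\<close>
lemma nn_integral_cball_norm_powr_neg_le: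
  fixes x :: "'a::euclidean_space" and s D :: real
  assumes "0 \<le> s" "s < DIM('a)" "0 \<le> D"
  shows "(\<integral>\<^sup>+ y. indicator (cball x D) y * ennreal (norm (x - y) powr (-s)) \<partial>lborel)
     \<le> ennreal (riesz_ball_bound DIM('a) s D)"
proof -
  define a where "a = s / DIM('a)"
  have a: "0 \<le> a" "a < 1" and sa: "s = a * DIM('a)"
    unfolding a_def using assms by auto
  let ?w = "truncated_power_weight a D"
  have pointwise: "indicator (cball x D) y * ennreal (norm (x - y) powr (-s))
      \<le> (\<Prod>b\<in>Basis. ?w (y \<bullet> b - x \<bullet> b))" for y
  proof (cases "y \<in> cball x D")
    case True
    then have coord: "\<bar>(y - x) \<bullet> b\<bar> \<le> D" if "b \<in> Basis" for b
      using Basis_le_norm[OF that, of "y - x"] by (simp add: dist_norm norm_minus_commute)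
    show ?thesis
    proof (cases "\<exists>b\<in>Basis. (y - x) \<bullet> b = 0")
      case True
      have "?w (y \<bullet> b - x \<bullet> b) \<noteq> 0" if "b \<in> Basis" for b
        using coord[OF that] by (auto simp: truncated_power_weight_def inner_diff_left indicator_def)
      then have "(\<Prod>b\<in>Basis. ?w (y \<bullet> b - x \<bullet> b)) = \<infinity>"
        using True by (auto simp: ennreal_prod_eq_top truncated_power_weight_def inner_diff_left)
      then show ?thesis by simp
    next
      case False
      have "?w (y \<bullet> b - x \<bullet> b) = ennreal (\<bar>(y - x) \<bullet> b\<bar> powr (-a))" if "b \<in> Basis" for b
        using coord[OF that] False that
        by (auto simp: truncated_power_weight_def inner_diff_left indicator_def)
      then have "(\<Prod>b\<in>Basis. ?w (y \<bullet> b - x \<bullet> b)) = ennreal (\<Prod>b\<in>Basis. \<bar>(y - x) \<bullet> b\<bar> powr (-a))"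
        by (simp add: prod_ennreal)
      moreover have "norm (x - y) powr (-s) \<le> (\<Prod>b\<in>Basis. \<bar>(y - x) \<bullet> b\<bar> powr (-a))"
        using norm_powr_neg_le_prod_abs_inner_powr[OF a(1), of "y - x"] False
        by (simp add: sa norm_minus_commute)
      ultimately show ?thesis using \<open>y \<in> cball x D\<close> by (simp add: ennreal_leI)
    qed
  qed simp
  have "(\<integral>\<^sup>+ y. indicator (cball x D) y * ennreal (norm (x - y) powr (-s)) \<partial>lborel)
      \<le> (\<integral>\<^sup>+ y. (\<Prod>b\<in>Basis. ?w (y \<bullet> b - x \<bullet> b)) \<partial>lborel)"
    by (intro nn_integral_mono pointwise)
  also have "\<dots> = (\<Prod>b\<in>(Basis::'a set). (\<integral>\<^sup>+ t. ?w (t - x \<bullet> b) \<partial>lborel))"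
    by (rule nn_integral_lborel_prod) auto
  also have "\<dots> = (\<Prod>b\<in>(Basis::'a set). ennreal (2 * (D powr (1 - a) / (1 - a))))"
  proof -
    have "(\<integral>\<^sup>+ t. ?w (t - c) \<partial>lborel) = (\<integral>\<^sup>+ t. ?w t \<partial>lborel)" for c
      using nn_integral_real_affine[of "\<lambda>t. ?w (t - c)" 1 c] by simp
    then show ?thesis by (simp add: nn_integral_truncated_power_weight[OF a assms(3)])
  qed
  finally show ?thesis
    using a by (simp add: riesz_ball_bound_def a_def prod_ennreal ennreal_power)
qed

section \<open>The kernel\<close>

locale cutoff_function =
  fixes \<psi> :: "real^'n \<Rightarrow> real" and M :: real
  assumes continuous: "continuous_on UNIV \<psi>"
    and vanishes_outside_ball: "\<And>z. \<psi> z \<noteq> 0 \<Longrightarrow> norm z < 1"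
    and abs_le_bound: "\<And>z. \<bar>\<psi> z\<bar> \<le> M"
begin

lemma bound_nonneg: "M \<ge> 0"
  using abs_le_bound[of 0] by linarith

lemma borel_measurable_cutoff[measurable]: "\<psi> \<in> borel_measurable borel"
  using continuous by (rule borel_measurable_continuous_onI)

lemma inner_fn_eq_0:
  assumes "x \<noteq> y" and "\<xi> > 1 + norm y"
  shows "inner_fn \<psi> x y \<xi> = 0"
proof -
  let ?v = "\<xi> *\<^sub>R ((x - y) /\<^sub>R norm (x - y))"
  have "\<xi> > 0" using assms(2) norm_ge_zero[of y] by linarith
  then have "norm ?v = \<xi>" using assms(1) by simp
  moreover have "norm ?v - norm y \<le> norm (y + ?v)"
    using norm_diff_ineq[of ?v y] by (simp only: add.commute)
  ultimately have "norm (y + ?v) \<ge> 1" using assms(2) by linarith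
  then show ?thesis
    using vanishes_outside_ball unfolding inner_fn_def by force
qed

lemma continuous_on_inner_fn: "continuous_on UNIV (inner_fn \<psi> x y)"
  unfolding inner_fn_def
  by (intro continuous_intros continuous_on_compose2[OF continuous]) auto

lemma abs_inner_fn_le:
  assumes "x \<noteq> y" and "0 \<le> \<xi>"
  shows "\<bar>inner_fn \<psi> x y \<xi>\<bar> \<le> M * (1 + norm y) ^ (CARD('n) - 1)"
proof (cases "\<xi> > 1 + norm y")
  case True
  then show ?thesis using inner_fn_eq_0[OF assms(1)] bound_nonneg by simp
next
  case False
  then have "\<xi> ^ (CARD('n) - 1) \<le> (1 + norm y) ^ (CARD('n) - 1)"
    using assms by (intro power_mono) auto
  then show ?thesis
    unfolding inner_fn_def abs_mult using abs_le_bound assms bound_nonneg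
    by (intro mult_mono) auto
qed

lemma set_integrable_inner_fn:
  assumes "x \<noteq> y"
  shows "set_integrable lborel {norm (x - y)..} (inner_fn \<psi> x y)"
    and "\<bar>LBINT \<xi>:{norm (x - y)..}. inner_fn \<psi> x y \<xi>\<bar> \<le> M * (1 + norm y) ^ CARD('n)"
proof -
  let ?d = "norm (x - y)" and ?f = "inner_fn \<psi> x y"
  define E where "E = max ?d (1 + norm y)"
  define B where "B = M * (1 + norm y) ^ (CARD('n) - 1)"
  have restrict: "indicator {?d..} \<xi> *\<^sub>R ?f \<xi> = indicator {?d..E} \<xi> *\<^sub>R ?f \<xi>" for \<xi>
    using inner_fn_eq_0[OF assms, of \<xi>] by (auto simp: indicator_def E_def not_le)
  have int: "set_integrable lborel {?d..E} ?f"
    by (intro borel_integrable_atLeastAtMost' continuous_on_subset[OF continuous_on_inner_fn]) simp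
  then show "set_integrable lborel {?d..} ?f"
    unfolding set_integrable_def restrict .
  have "(LBINT \<xi>:{?d..}. ?f \<xi>) = (LBINT \<xi>:{?d..E}. ?f \<xi>)"
    unfolding set_lebesgue_integral_def restrict ..
  then have "\<bar>LBINT \<xi>:{?d..}. ?f \<xi>\<bar> = norm (integral (cbox ?d E) ?f)"
    using set_borel_integral_eq_integral(2)[OF int] by simp
  also have "\<dots> \<le> B * Henstock_Kurzweil_Integration.content (cbox ?d E)"
  proof (rule integrable_bound)
    show "?f integrable_on cbox ?d E"
      using set_borel_integral_eq_integral(1)[OF int] by simp
    show "norm (?f \<xi>) \<le> B" if "\<xi> \<in> cbox ?d E" for \<xi>
      using that abs_inner_fn_le[OF assms, of \<xi>] norm_ge_zero[of "x - y"]
      unfolding B_def by simp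
  qed (simp add: B_def bound_nonneg)
  also have "\<dots> \<le> B * (1 + norm y)"
    unfolding B_def E_def using bound_nonneg norm_ge_zero[of "x - y"]
    by (intro mult_left_mono) (auto simp: max_def)
  also have "\<dots> = M * (1 + norm y) ^ CARD('n)"
    unfolding B_def power_CARD_eq_mult by (simp add: ac_simps)
  finally show "\<bar>LBINT \<xi>:{?d..}. ?f \<xi>\<bar> \<le> M * (1 + norm y) ^ CARD('n)" .
qed

lemma kernel_self: "kernel \<psi> x x = 0"
  by (simp add: kernel_def)

lemma norm_kernel_le:
  "norm (kernel \<psi> x y) \<le> M * (1 + norm y) ^ CARD('n) / norm (x - y) ^ (CARD('n) - 1)"
proof (cases "x = y")
  case True
  then show ?thesis by (simp add: kernel_self bound_nonneg)
next
  case False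
  let ?d = "norm (x - y)"
  have "norm (kernel \<psi> x y) = \<bar>LBINT \<xi>:{?d..}. inner_fn \<psi> x y \<xi>\<bar> * ?d / (?d * ?d ^ (CARD('n) - 1))"
    unfolding kernel_def power_CARD_eq_mult by (simp add: abs_div)
  also have "\<dots> = \<bar>LBINT \<xi>:{?d..}. inner_fn \<psi> x y \<xi>\<bar> / ?d ^ (CARD('n) - 1)"
    using False by simp
  also have "\<dots> \<le> M * (1 + norm y) ^ CARD('n) / ?d ^ (CARD('n) - 1)"
    by (intro divide_right_mono set_integrable_inner_fn(2)[OF False]) simp
  finally show ?thesis .
qed

text \<open>If the ray from \<open>y \<in> \<Omega>\<close> through \<open>x\<close> met the unit ball at some point \<open>p\<close> beyond \<open>x\<close>,
  then \<open>x\<close> would lie on the segment \<open>[y, p] \<subseteq> \<Omega>\<close>.\<close>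
lemma kernel_eq_0_outside:
  assumes star: "\<forall>p\<in>cball 0 1. star_shaped_wrt p \<Omega>" and "x \<notin> \<Omega>" and "y \<in> \<Omega>"
  shows "kernel \<psi> x y = 0"
proof -
  let ?d = "norm (x - y)" and ?u = "(x - y) /\<^sub>R norm (x - y)"
  have d0: "?d > 0" using assms by auto
  have "inner_fn \<psi> x y \<xi> = 0" if "?d \<le> \<xi>" for \<xi>
  proof (rule ccontr)
    define p where "p = y + \<xi> *\<^sub>R ?u"
    assume "inner_fn \<psi> x y \<xi> \<noteq> 0"
    then have "p \<in> cball 0 1"
      using vanishes_outside_ball unfolding inner_fn_def p_def by fastforce
    then have "closed_segment y p \<subseteq> \<Omega>"
      using star \<open>y \<in> \<Omega>\<close> unfolding star_shaped_wrt_def by (auto simp: closed_segment_commute)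
    moreover have "x \<in> closed_segment y p"
    proof -
      have "\<xi> > 0" using d0 that by linarith
      have "(1 - ?d / \<xi>) *\<^sub>R y + (?d / \<xi>) *\<^sub>R p = y + (?d / \<xi> * \<xi>) *\<^sub>R ?u"
        unfolding p_def by (simp add: algebra_simps)
      also have "\<dots> = x" using \<open>\<xi> > 0\<close> d0 by simp
      finally have "x = (1 - ?d / \<xi>) *\<^sub>R y + (?d / \<xi>) *\<^sub>R p" ..
      moreover have "0 \<le> ?d / \<xi>" and "?d / \<xi> \<le> 1"
        using \<open>\<xi> > 0\<close> that by auto
      ultimately show ?thesis
        unfolding closed_segment_def by blast
    qed
    ultimately show False using \<open>x \<notin> \<Omega>\<close> by blast
  qed
  then have "(\<lambda>\<xi>. indicator {?d..} \<xi> *\<^sub>R inner_fn \<psi> x y \<xi>) = (\<lambda>_. 0)"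
    by (auto simp: indicator_def)
  then show ?thesis
    unfolding kernel_def set_lebesgue_integral_def by simp
qed

lemma kernel_eq_dilation_form:
  "kernel \<psi> x y = (LBINT \<alpha>:{1..}. \<psi> (y + \<alpha> *\<^sub>R (x - y)) * \<alpha> ^ (CARD('n) - 1)) *\<^sub>R (x - y)"
proof (cases "x = y")
  case False
  let ?d = "norm (x - y)" and ?f = "inner_fn \<psi> x y"
  let ?h = "\<lambda>\<alpha>. \<psi> (y + \<alpha> *\<^sub>R (x - y)) * \<alpha> ^ (CARD('n) - 1)"
  have d0: "?d > 0" using False by simp
  have "(LBINT \<xi>:{?d..}. ?f \<xi>) = ?d *\<^sub>R (LINT \<alpha>|lborel. indicator {?d..} (0 + ?d * \<alpha>) * ?f (0 + ?d * \<alpha>))"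
    unfolding set_lebesgue_integral_def using d0
    by (subst lborel_integral_real_affine[where c = ?d and t = 0]) auto
  also have "(\<lambda>\<alpha>. indicator {?d..} (0 + ?d * \<alpha>) * ?f (0 + ?d * \<alpha>))
      = (\<lambda>\<alpha>. ?d ^ (CARD('n) - 1) * (indicator {1..} \<alpha> *\<^sub>R ?h \<alpha>))"
  proof
    fix \<alpha>
    have i: "indicator {?d..} (?d * \<alpha>) = (indicator {1..} \<alpha> :: real)"
      using d0 by (simp add: indicator_def)
    have e: "(?d * \<alpha>) *\<^sub>R ((x - y) /\<^sub>R ?d) = \<alpha> *\<^sub>R (x - y)"
      using d0 by simp
    show "indicator {?d..} (0 + ?d * \<alpha>) * ?f (0 + ?d * \<alpha>)
        = ?d ^ (CARD('n) - 1) * (indicator {1..} \<alpha> *\<^sub>R ?h \<alpha>)"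
      unfolding inner_fn_def add_0 i e by (simp add: power_mult_distrib mult_ac)
  qed
  also have "(LINT \<alpha>|lborel. ?d ^ (CARD('n) - 1) * (indicator {1..} \<alpha> *\<^sub>R ?h \<alpha>))
      = ?d ^ (CARD('n) - 1) * (LBINT \<alpha>:{1..}. ?h \<alpha>)"
    unfolding set_lebesgue_integral_def by (rule integral_mult_right_zero)
  finally have "(LBINT \<xi>:{?d..}. ?f \<xi>) = ?d ^ CARD('n) * (LBINT \<alpha>:{1..}. ?h \<alpha>)"
    by (simp add: power_CARD_eq_mult)
  then show ?thesis unfolding kernel_def using d0 by simp
qed (simp add: kernel_def)

lemma kernel_eq_shifted_form:
  "kernel \<psi> x y = ((LBINT r:{0..}. \<psi> (x + r *\<^sub>R ((x - y) /\<^sub>R norm (x - y)))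
      * (norm (x - y) + r) ^ (CARD('n) - 1)) / norm (x - y) ^ CARD('n)) *\<^sub>R (x - y)"
proof (cases "x = y")
  case False
  let ?d = "norm (x - y)" and ?u = "(x - y) /\<^sub>R norm (x - y)" and ?f = "inner_fn \<psi> x y"
  have "(LBINT \<xi>:{?d..}. ?f \<xi>) = (LINT r|lborel. indicator {?d..} (?d + 1 * r) * ?f (?d + 1 * r))"
    unfolding set_lebesgue_integral_def
    by (subst lborel_integral_real_affine[where c = 1 and t = ?d]) auto
  also have "(\<lambda>r. indicator {?d..} (?d + 1 * r) * ?f (?d + 1 * r))
      = (\<lambda>r. indicator {0..} r *\<^sub>R (\<psi> (x + r *\<^sub>R ?u) * (?d + r) ^ (CARD('n) - 1)))"
  proof
    fix r
    have "y + (?d + r) *\<^sub>R ?u = y + ?d *\<^sub>R ?u + r *\<^sub>R ?u"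
      by (simp only: scaleR_add_left add.assoc)
    also have "\<dots> = x + r *\<^sub>R ?u" using False by simp
    finally show "indicator {?d..} (?d + 1 * r) * ?f (?d + 1 * r)
        = indicator {0..} r *\<^sub>R (\<psi> (x + r *\<^sub>R ?u) * (?d + r) ^ (CARD('n) - 1))"
      unfolding inner_fn_def by (simp add: indicator_def)
  qed
  finally show ?thesis unfolding kernel_def set_lebesgue_integral_def by simp
qed (simp add: kernel_def)

lemma borel_measurable_kernel[measurable]: "kernel \<psi> x \<in> borel_measurable borel"
proof -
  have "indicator {norm (x - y)..} \<xi> *\<^sub>R inner_fn \<psi> x y \<xi>
      = (if norm (x - y) \<le> \<xi> then \<psi> (y + \<xi> *\<^sub>R ((x - y) /\<^sub>R norm (x - y))) * \<xi> ^ (CARD('n) - 1) else 0)"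
    for y \<xi> by (simp add: indicator_def inner_fn_def)
  then have "(\<lambda>(y, \<xi>). indicator {norm (x - y)..} \<xi> *\<^sub>R inner_fn \<psi> x y \<xi>)
      \<in> borel_measurable (borel \<Otimes>\<^sub>M lborel)"
    by (simp only:) measurable
  then have "(\<lambda>y. LBINT \<xi>:{norm (x - y)..}. inner_fn \<psi> x y \<xi>) \<in> borel_measurable borel"
    unfolding set_lebesgue_integral_def
    using lborel.borel_measurable_lebesgue_integral by simp
  then show ?thesis
    unfolding kernel_def[abs_def]
    by (intro borel_measurable_scaleR borel_measurable_divide borel_measurable_power
        borel_measurable_norm borel_measurable_diff borel_measurable_const measurable_ident_sets)
       simp_all
qed

lemma norm_kernel_powr_le:
  assumes "x \<noteq> y" and "norm y \<le> D" and "p > 0"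
  shows "norm (kernel \<psi> x y) powr p
    \<le> (M * (1 + D) ^ CARD('n)) powr p * norm (x - y) powr (- ((real CARD('n) - 1) * p))"
proof -
  define C where "C = M * (1 + D) ^ CARD('n)"
  let ?d = "norm (x - y)"
  have d0: "?d > 0" using assms(1) by simp
  have "norm (kernel \<psi> x y) \<le> M * (1 + norm y) ^ CARD('n) / ?d ^ (CARD('n) - 1)"
    by (rule norm_kernel_le)
  also have "\<dots> \<le> C / ?d ^ (CARD('n) - 1)"
    unfolding C_def using assms(2) bound_nonneg
    by (intro divide_right_mono mult_left_mono power_mono) auto
  finally have "norm (kernel \<psi> x y) powr p \<le> (C / ?d ^ (CARD('n) - 1)) powr p"
    using assms(3) by (intro powr_mono2) auto
  also have "?d ^ (CARD('n) - 1) = ?d powr (real CARD('n) - 1)"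
    unfolding of_nat_CARD_minus_1[symmetric] by (rule powr_realpow[symmetric]) (use d0 in simp)
  also have "(C / ?d powr (real CARD('n) - 1)) powr p = C powr p / (?d powr (real CARD('n) - 1)) powr p"
    by (rule powr_divide)
  also have "(?d powr (real CARD('n) - 1)) powr p = ?d powr ((real CARD('n) - 1) * p)"
    by (rule powr_powr)
  also have "C powr p / ?d powr ((real CARD('n) - 1) * p) = C powr p * ?d powr (- ((real CARD('n) - 1) * p))"
    by (simp add: powr_minus divide_inverse)
  finally show ?thesis unfolding C_def .
qed

definition kernel_Lp_bound :: "real \<Rightarrow> real \<Rightarrow> real" where
  "kernel_Lp_bound D p =
     (M * (1 + D) ^ CARD('n)) powr p * riesz_ball_bound CARD('n) ((real CARD('n) - 1) * p) D"

lemma nn_integral_norm_kernel_powr_le: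
  assumes "\<forall>y\<in>\<Omega>. norm y \<le> D" and "\<Omega> \<subseteq> cball x D" and "0 \<le> D"
    and "p > 0" and "(real CARD('n) - 1) * p < CARD('n)"
  shows "(\<integral>\<^sup>+ y. indicator \<Omega> y * ennreal (norm (kernel \<psi> x y) powr p) \<partial>lborel)
    \<le> ennreal (kernel_Lp_bound D p)"
proof -
  define C where "C = (M * (1 + D) ^ CARD('n)) powr p"
  define s where "s = (real CARD('n) - 1) * p"
  have [measurable]: "cball x D \<in> sets borel" by simp
  have pointwise: "indicator \<Omega> y * ennreal (norm (kernel \<psi> x y) powr p)
      \<le> ennreal C * (indicator (cball x D) y * ennreal (norm (x - y) powr (-s)))" for y
  proof (cases "y \<in> \<Omega> \<and> y \<noteq> x")
    case True
    have "norm (kernel \<psi> x y) powr p \<le> C * norm (x - y) powr (-s)"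
      using True assms(1,4) unfolding C_def s_def by (intro norm_kernel_powr_le) auto
    moreover have "y \<in> cball x D" using True assms(2) by blast
    ultimately show ?thesis
      using True by (simp add: C_def ennreal_mult'[symmetric] ennreal_leI)
  qed (use kernel_self in \<open>auto simp: indicator_def\<close>)
  have "(\<integral>\<^sup>+ y. indicator \<Omega> y * ennreal (norm (kernel \<psi> x y) powr p) \<partial>lborel)
      \<le> (\<integral>\<^sup>+ y. ennreal C * (indicator (cball x D) y * ennreal (norm (x - y) powr (-s))) \<partial>lborel)"
    by (intro nn_integral_mono pointwise)
  also have "\<dots> = ennreal C * (\<integral>\<^sup>+ y. indicator (cball x D) y * ennreal (norm (x - y) powr (-s)) \<partial>lborel)"
    by (rule nn_integral_cmult) measurable
  also have "\<dots> \<le> ennreal C * ennreal (riesz_ball_bound CARD('n) s D)"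
    using nn_integral_cball_norm_powr_neg_le[of s D x] one_le_real_CARD[where 'n = 'n] assms(3-5)
    unfolding s_def by (intro mult_left_mono) simp_all
  also have "\<dots> = ennreal (kernel_Lp_bound D p)"
    unfolding kernel_Lp_bound_def C_def s_def by (rule ennreal_mult'[symmetric]) simp
  finally show ?thesis .
qed

definition sup_bound :: "real \<Rightarrow> real \<Rightarrow> real" where
  "sup_bound D q = kernel_Lp_bound D (q / (q - 1)) powr ((q - 1) / q)"

end

section \<open>The operator\<close>

locale kernel_setting = cutoff_function \<psi> M for \<psi> :: "real^'n \<Rightarrow> real" and M +
  fixes \<Omega> :: "(real^'n) set" and F :: "real^'n \<Rightarrow> real" and q D :: real
  assumes bounded_domain: "bounded \<Omega>"
    and open_domain: "open \<Omega>"
    and star_shaped: "\<forall>p\<in>cball 0 1. star_shaped_wrt p \<Omega>"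
    and diameter_domain: "diameter \<Omega> = D"
    and measurable_F: "F \<in> borel_measurable (lebesgue_on \<Omega>)"
    and integrable_F_powr: "set_integrable lebesgue \<Omega> (\<lambda>y. \<bar>F y\<bar> powr q)"
    and exponent_gt: "q > CARD('n)"
begin

lemma zero_in_domain: "0 \<in> \<Omega>"
  using star_shaped by (auto simp: star_shaped_wrt_def)

lemma dist_le_diameter: "x \<in> \<Omega> \<Longrightarrow> y \<in> \<Omega> \<Longrightarrow> dist x y \<le> D"
  using diameter_bounded_bound[OF bounded_domain] diameter_domain by simp

lemma norm_le_diameter: "y \<in> \<Omega> \<Longrightarrow> norm y \<le> D"
  using dist_le_diameter[OF zero_in_domain] by simp

lemma diameter_nonneg: "0 \<le> D"
  using norm_le_diameter[OF zero_in_domain] by simp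

lemma domain_sets_lebesgue: "\<Omega> \<inter> space lebesgue \<in> sets lebesgue"
  using open_domain by simp

lemma integrable_on_domain_F_powr: "integrable (lebesgue_on \<Omega>) (\<lambda>y. \<bar>F y\<bar> powr q)"
  using integrable_F_powr
  unfolding set_integrable_def integrable_restrict_space[OF domain_sets_lebesgue, symmetric] .

lemma kernel_measurable_on_domain: "kernel \<psi> x \<in> borel_measurable (lebesgue_on \<Omega>)"
  by (intro measurable_restrict_space1 measurable_completion) simp

lemma integrand_eq_0_outside:
  assumes "x \<notin> \<Omega>"
  shows "(\<lambda>y. indicator \<Omega> y *\<^sub>R (F y *\<^sub>R kernel \<psi> x y)) = (\<lambda>_. 0)"
  using kernel_eq_0_outside[OF star_shaped assms] by (auto simp: indicator_def)

definition dual_exponent :: real where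
  "dual_exponent = q / (q - 1)"

lemma conjugate_exponents:
  shows "q > 1" and "dual_exponent > 1" and "1 / q + 1 / dual_exponent = 1"
    and "(real CARD('n) - 1) * dual_exponent < CARD('n)"
proof -
  show q1: "q > 1" using exponent_gt one_le_real_CARD[where 'n = 'n] by linarith
  then show "dual_exponent > 1" and "1 / q + 1 / dual_exponent = 1"
    unfolding dual_exponent_def by (simp_all add: field_simps)
  have "(real CARD('n) - 1) * q < real CARD('n) * (q - 1)"
    using exponent_gt by (simp add: algebra_simps)
  then show "(real CARD('n) - 1) * dual_exponent < CARD('n)"
    unfolding dual_exponent_def using q1 by (simp add: field_simps)
qed

lemma kernel_in_dual_Lebesgue_space:
  assumes "x \<in> \<Omega>"
  shows "integrable (lebesgue_on \<Omega>) (\<lambda>y. \<bar>norm (kernel \<psi> x y)\<bar> powr dual_exponent)"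
    and "(LINT y|lebesgue_on \<Omega>. \<bar>norm (kernel \<psi> x y)\<bar> powr dual_exponent)
      \<le> kernel_Lp_bound D dual_exponent"
proof -
  let ?g = "\<lambda>y. \<bar>norm (kernel \<psi> x y)\<bar> powr dual_exponent"
  have "(\<integral>\<^sup>+ y. ennreal (?g y) \<partial>lebesgue_on \<Omega>)
      = (\<integral>\<^sup>+ y. indicator \<Omega> y * ennreal (norm (kernel \<psi> x y) powr dual_exponent) \<partial>lborel)"
    by (simp add: nn_integral_restrict_space[OF domain_sets_lebesgue] nn_integral_completion
        mult.commute)
  also have "\<dots> \<le> ennreal (kernel_Lp_bound D dual_exponent)"
    using norm_le_diameter dist_le_diameter[OF assms] diameter_nonneg conjugate_exponents
    by (intro nn_integral_norm_kernel_powr_le) (auto simp: subset_iff)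
  finally have bound: "(\<integral>\<^sup>+ y. ennreal (?g y) \<partial>lebesgue_on \<Omega>) \<le> ennreal (kernel_Lp_bound D dual_exponent)" .
  have "?g \<in> borel_measurable (lebesgue_on \<Omega>)"
    using kernel_measurable_on_domain by measurable
  then show int: "integrable (lebesgue_on \<Omega>) ?g"
    using bound by (intro integrableI_nonneg) (auto simp: top.not_eq_extremum le_less_trans)
  have "0 \<le> kernel_Lp_bound D dual_exponent"
    unfolding kernel_Lp_bound_def riesz_ball_bound_def using conjugate_exponents(4)
    by (simp add: field_simps)
  then show "(LINT y|lebesgue_on \<Omega>. ?g y) \<le> kernel_Lp_bound D dual_exponent"
    using bound nn_integral_eq_integral[OF int] by (simp add: ennreal_le_iff)
qed

lemma integrable_F_times_kernel: "set_integrable lebesgue \<Omega> (\<lambda>y. F y *\<^sub>R kernel \<psi> x y)"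
proof (cases "x \<in> \<Omega>")
  case True
  have "integrable (lebesgue_on \<Omega>) (\<lambda>y. F y * norm (kernel \<psi> x y))"
    using integrable_on_domain_F_powr kernel_in_dual_Lebesgue_space(1)[OF True] measurable_F
      kernel_measurable_on_domain conjugate_exponents(1-3)
    by (intro integrable_mult_if_conjugate_powr_integrable) auto
  then have "integrable (lebesgue_on \<Omega>) (\<lambda>y. F y *\<^sub>R kernel \<psi> x y)"
  proof (rule Bochner_Integration.integrable_bound)
    show "(\<lambda>y. F y *\<^sub>R kernel \<psi> x y) \<in> borel_measurable (lebesgue_on \<Omega>)"
      using measurable_F kernel_measurable_on_domain by (rule borel_measurable_scaleR)
  qed (simp add: abs_mult)
  then show ?thesis
    unfolding set_integrable_def integrable_restrict_space[OF domain_sets_lebesgue] .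
next
  case False
  then show ?thesis
    unfolding set_integrable_def integrand_eq_0_outside[OF False] by simp
qed

lemma v_op_eq_0_outside: "x \<notin> \<Omega> \<Longrightarrow> v_op \<psi> \<Omega> F x = 0"
  unfolding v_op_def set_lebesgue_integral_def by (subst integrand_eq_0_outside) simp_all

lemma norm_v_op_le: "norm (v_op \<psi> \<Omega> F x) \<le> sup_bound D q * Lq_norm q \<Omega> F"
proof (cases "x \<in> \<Omega>")
  case True
  let ?L = "lebesgue_on \<Omega>" and ?p = dual_exponent
  have kernel_measurable: "(\<lambda>y. norm (kernel \<psi> x y)) \<in> borel_measurable ?L"
    using kernel_measurable_on_domain by measurable
  have "norm (v_op \<psi> \<Omega> F x) = norm (LINT y|?L. F y *\<^sub>R kernel \<psi> x y)"
    unfolding v_op_def set_lebesgue_integral_def integral_restrict_space[OF domain_sets_lebesgue] ..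
  also have "\<dots> \<le> (LINT y|?L. \<bar>F y * norm (kernel \<psi> x y)\<bar>)"
    using integral_norm_bound[of ?L "\<lambda>y. F y *\<^sub>R kernel \<psi> x y"] by (simp add: abs_mult)
  also have "\<dots> \<le> (LINT y|?L. \<bar>F y\<bar> powr q) powr (1/q)
      * (LINT y|?L. \<bar>norm (kernel \<psi> x y)\<bar> powr ?p) powr (1/?p)"
    using measurable_F kernel_measurable integrable_on_domain_F_powr kernel_in_dual_Lebesgue_space(1)[OF True]
      conjugate_exponents(1-3)
    by (intro Holder_inequality) auto
  also have "\<dots> \<le> (LINT y|?L. \<bar>F y\<bar> powr q) powr (1/q) * kernel_Lp_bound D ?p powr (1/?p)"
    using kernel_in_dual_Lebesgue_space(2)[OF True] conjugate_exponents(2)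
    by (intro mult_left_mono powr_mono2) auto
  also have "\<dots> = sup_bound D q * Lq_norm q \<Omega> F"
    unfolding sup_bound_def Lq_norm_def dual_exponent_def set_lebesgue_integral_def
      integral_restrict_space[OF domain_sets_lebesgue, symmetric]
    by (simp add: mult.commute)
  finally show ?thesis .
next
  case False
  then show ?thesis
    by (simp add: v_op_eq_0_outside sup_bound_def Lq_norm_def)
qed

lemma v_op_eq_reflected_integral:
  "v_op \<psi> \<Omega> F x = (LINT z:(\<lambda>y. x - y) ` \<Omega>|lebesgue. F (x - z) *\<^sub>R kernel \<psi> x (x - z))"
proof -
  have "set_borel_measurable lebesgue \<Omega> (\<lambda>y. F y *\<^sub>R kernel \<psi> x y)"
    using integrable_F_times_kernel[of x] unfolding set_integrable_def set_borel_measurable_def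
    by (rule borel_measurable_integrable)
  then show ?thesis
    unfolding v_op_def by (rule set_integral_reflection)
qed

lemma v_op_properties:
  "(\<forall>x y. x \<noteq> y \<longrightarrow> set_integrable lborel {norm (x - y)..} (inner_fn \<psi> x y))
     \<and> (\<forall>x. set_integrable lebesgue \<Omega> (\<lambda>y. F y *\<^sub>R kernel \<psi> x y))
     \<and> (\<forall>x. x \<notin> \<Omega> \<longrightarrow> v_op \<psi> \<Omega> F x = 0)
     \<and> (\<forall>x. norm (v_op \<psi> \<Omega> F x) \<le> sup_bound D q * Lq_norm q \<Omega> F)
     \<and> (\<forall>x. v_op \<psi> \<Omega> F x =
          (LINT y:\<Omega>|lebesgue. F y *\<^sub>R
             ((LBINT \<alpha>:{1..}. \<psi> (y + \<alpha> *\<^sub>R (x - y)) * \<alpha> ^ (CARD('n) - 1)) *\<^sub>R (x - y))))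
     \<and> (\<forall>x. v_op \<psi> \<Omega> F x =
          (LINT y:\<Omega>|lebesgue. F y *\<^sub>R
             (((LBINT r:{0..}. \<psi> (x + r *\<^sub>R ((x - y) /\<^sub>R norm (x - y))) * (norm (x - y) + r) ^ (CARD('n) - 1))
               / norm (x - y) ^ CARD('n)) *\<^sub>R (x - y))))
     \<and> (\<forall>x. v_op \<psi> \<Omega> F x =
          (LINT z:((\<lambda>y. x - y) ` \<Omega>)|lebesgue. F (x - z) *\<^sub>R
             (((LBINT r:{0..}. \<psi> (x + r *\<^sub>R (z /\<^sub>R norm z)) * (norm z + r) ^ (CARD('n) - 1))
               / norm z ^ CARD('n)) *\<^sub>R z)))"
proof -
  have "v_op \<psi> \<Omega> F x = (LINT y:\<Omega>|lebesgue. F y *\<^sub>R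
      ((LBINT \<alpha>:{1..}. \<psi> (y + \<alpha> *\<^sub>R (x - y)) * \<alpha> ^ (CARD('n) - 1)) *\<^sub>R (x - y)))" for x
    unfolding v_op_def kernel_eq_dilation_form ..
  moreover have "v_op \<psi> \<Omega> F x = (LINT y:\<Omega>|lebesgue. F y *\<^sub>R
      (((LBINT r:{0..}. \<psi> (x + r *\<^sub>R ((x - y) /\<^sub>R norm (x - y))) * (norm (x - y) + r) ^ (CARD('n) - 1))
        / norm (x - y) ^ CARD('n)) *\<^sub>R (x - y)))" for x
    unfolding v_op_def kernel_eq_shifted_form ..
  moreover have "v_op \<psi> \<Omega> F x = (LINT z:((\<lambda>y. x - y) ` \<Omega>)|lebesgue. F (x - z) *\<^sub>R
      (((LBINT r:{0..}. \<psi> (x + r *\<^sub>R (z /\<^sub>R norm z)) * (norm z + r) ^ (CARD('n) - 1))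
        / norm z ^ CARD('n)) *\<^sub>R z))" for x
    unfolding v_op_eq_reflected_integral kernel_eq_shifted_form by simp
  ultimately show ?thesis
    using set_integrable_inner_fn(1) integrable_F_times_kernel v_op_eq_0_outside norm_v_op_le
    by blast
qed

end

theorem theorem1:
  fixes \<psi> :: "real^'n \<Rightarrow> real" and q :: real
  assumes n2: "CARD('n) \<ge> 2"
    and smooth: "smooth_fun \<psi>"
    and supp: "supp \<psi> \<subseteq> ball 0 1"
    and nonzero: "\<exists>x. \<psi> x \<noteq> 0"
    and q: "q > real CARD('n)"
  shows "\<forall>D. \<exists>c. \<forall>(\<Omega> :: (real^'n) set) (F :: real^'n \<Rightarrow> real).
     bounded \<Omega> \<and> open \<Omega> \<and> (\<forall>p\<in>cball 0 1. star_shaped_wrt p \<Omega>) \<and> diameter \<Omega> = D \<and>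
     F \<in> borel_measurable (lebesgue_on \<Omega>) \<and> set_integrable lebesgue \<Omega> (\<lambda>y. \<bar>F y\<bar> powr q)
     \<longrightarrow>
       (\<forall>x y. x \<noteq> y \<longrightarrow> set_integrable lborel {norm (x - y)..} (inner_fn \<psi> x y))
     \<and> (\<forall>x. set_integrable lebesgue \<Omega> (\<lambda>y. F y *\<^sub>R kernel \<psi> x y))
     \<and> (\<forall>x. x \<notin> \<Omega> \<longrightarrow> v_op \<psi> \<Omega> F x = 0)
     \<and> (\<forall>x. norm (v_op \<psi> \<Omega> F x) \<le> c * Lq_norm q \<Omega> F)
     \<and> (\<forall>x. v_op \<psi> \<Omega> F x =
          (LINT y:\<Omega>|lebesgue. F y *\<^sub>R
             ((LBINT \<alpha>:{1..}. \<psi> (y + \<alpha> *\<^sub>R (x - y)) * \<alpha> ^ (CARD('n) - 1)) *\<^sub>R (x - y))))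
     \<and> (\<forall>x. v_op \<psi> \<Omega> F x =
          (LINT y:\<Omega>|lebesgue. F y *\<^sub>R
             (((LBINT r:{0..}. \<psi> (x + r *\<^sub>R ((x - y) /\<^sub>R norm (x - y))) * (norm (x - y) + r) ^ (CARD('n) - 1))
               / norm (x - y) ^ CARD('n)) *\<^sub>R (x - y))))
     \<and> (\<forall>x. v_op \<psi> \<Omega> F x =
          (LINT z:((\<lambda>y. x - y) ` \<Omega>)|lebesgue. F (x - z) *\<^sub>R
             (((LBINT r:{0..}. \<psi> (x + r *\<^sub>R (z /\<^sub>R norm z)) * (norm z + r) ^ (CARD('n) - 1))
               / norm z ^ CARD('n)) *\<^sub>R z)))"
proof -
  have continuous: "continuous_on UNIV \<psi>"
    by (rule smooth_fun_imp_continuous[OF smooth])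
  have vanishes: "\<And>z. \<psi> z \<noteq> 0 \<Longrightarrow> norm z < 1"
    by (rule norm_less_one_if_supp_subset_ball[OF supp])
  obtain M where "\<And>z. \<bar>\<psi> z\<bar> \<le> M"
    using bounded_if_continuous_vanishing_outside_ball[OF continuous vanishes] by blast
  then have cutoff: "cutoff_function \<psi> M"
    using continuous vanishes by unfold_locales
  have setting: "kernel_setting \<psi> M \<Omega> F q D"
    if "bounded \<Omega>" "open \<Omega>" "\<forall>p\<in>cball 0 1. star_shaped_wrt p \<Omega>" "diameter \<Omega> = D"
      "F \<in> borel_measurable (lebesgue_on \<Omega>)" "set_integrable lebesgue \<Omega> (\<lambda>y. \<bar>F y\<bar> powr q)"
    for \<Omega> F D
    using cutoff q that unfolding kernel_setting_def kernel_setting_axioms_def by blast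
  show ?thesis
    by (intro allI exI impI, elim conjE) (rule kernel_setting.v_op_properties[OF setting])
qed

end
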